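(* The eventual equality relation $E_0$ on $2^\mathbb{N}$ is $\Delta^0_2$-graphable with diameter $2$.
   Context: $xE_0y$ iff there is $m$ with $x(n)=y(n)$ for all $n\ge m$. $E$ is $\Gamma$-graphable with diameter $k$ if there is a simple undirected graph $G$ in $\Gamma$ whose connectedness relation equals $E$ and $k$ is the least integer such that any two $G$-connected points are joined by a path of length at most $k$. *)

theory Defs
  imports "HOL-Analysis.Analysis"
begin

text \<open>Cantor space 2^N is nat => bool with the product topology (bool discrete),
  from HOL-Analysis Function_Topology; pairs carry the product topology.\<close>

definition E0 :: "(nat \<Rightarrow> bool) \<Rightarrow> (nat \<Rightarrow> bool) \<Rightarrow> bool" where
  "E0 x y \<longleftrightarrow> (\<exists>m. \<forall>n\<ge>m. x n = y n)"

definition sigma02 :: "'a::topological_space set \<Rightarrow> bool" where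
  "sigma02 S \<longleftrightarrow> (\<exists>F :: nat \<Rightarrow> 'a set. (\<forall>n. closed (F n)) \<and> S = (\<Union>n. F n))"

definition pi02 :: "'a::topological_space set \<Rightarrow> bool" where
  "pi02 S \<longleftrightarrow> (\<exists>U :: nat \<Rightarrow> 'a set. (\<forall>n. open (U n)) \<and> S = (\<Inter>n. U n))"

definition delta02 :: "'a::topological_space set \<Rightarrow> bool" where
  "delta02 S \<longleftrightarrow> sigma02 S \<and> pi02 S"

definition simple_graph :: "('a \<Rightarrow> 'a \<Rightarrow> bool) \<Rightarrow> bool" where
  "simple_graph G \<longleftrightarrow> (\<forall>x y. G x y \<longrightarrow> G y x) \<and> (\<forall>x. \<not> G x x)"

definition joined :: "('a \<Rightarrow> 'a \<Rightarrow> bool) \<Rightarrow> nat \<Rightarrow> 'a \<Rightarrow> 'a \<Rightarrow> bool" where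
  "joined G n x y \<longleftrightarrow> (\<exists>p :: nat \<Rightarrow> 'a. p 0 = x \<and> p n = y \<and> (\<forall>i<n. G (p i) (p (Suc i))))"

definition graph_connected_rel :: "('a \<Rightarrow> 'a \<Rightarrow> bool) \<Rightarrow> 'a \<Rightarrow> 'a \<Rightarrow> bool" where
  "graph_connected_rel G x y \<longleftrightarrow> (\<exists>n. joined G n x y)"

definition diam_bounded :: "('a \<Rightarrow> 'a \<Rightarrow> bool) \<Rightarrow> nat \<Rightarrow> bool" where
  "diam_bounded G k \<longleftrightarrow> (\<forall>x y. graph_connected_rel G x y \<longrightarrow> (\<exists>n\<le>k. joined G n x y))"

definition has_diameter :: "('a \<Rightarrow> 'a \<Rightarrow> bool) \<Rightarrow> nat \<Rightarrow> bool" where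
  "has_diameter G k \<longleftrightarrow> diam_bounded G k \<and> (\<forall>j<k. \<not> diam_bounded G j)"

definition delta02_graphable_diam :: "(('a::topological_space) \<Rightarrow> 'a \<Rightarrow> bool) \<Rightarrow> nat \<Rightarrow> bool" where
  "delta02_graphable_diam E k \<longleftrightarrow>
     (\<exists>G. simple_graph G \<and> delta02 {(x, y). G x y} \<and> graph_connected_rel G = E \<and> has_diameter G k)"

end

theory Submission
  imports Defs
begin

(* Join distinct x and y when one of them, say z, has the form 1^a 0 ... and the other agrees
   with z beyond position a. If x and y agree from m on, both are equal or adjacent to
   1^m 0 x(m+1) x(m+2) ..., so the graph generates E0 with diameter at most 2, while 000... and
   0100... are not adjacent. The edge set is Delta^0_2 since "z has a zero" is a countable union
   and "z and w agree after every zero of z" a countable intersection of clopen cylinders. *)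

definition clopen :: "'a::topological_space set \<Rightarrow> bool" where
  "clopen S \<longleftrightarrow> open S \<and> closed S"

lemma clopen_Collect_continuous:
  fixes f :: "'a::topological_space \<Rightarrow> bool"
  assumes "continuous_on UNIV f"
  shows "clopen {x. f x}"
proof -
  have "{x. f x} = f -` {True}"
    by auto
  moreover have "open (f -` {True})" "closed (f -` {True})"
    using assms by (simp_all add: open_vimage closed_vimage open_discrete)
  ultimately show ?thesis
    unfolding clopen_def by simp
qed

lemma clopen_Collect_coordinate:
  fixes f :: "'a::topological_space \<Rightarrow> 'i \<Rightarrow> bool"
  assumes "continuous_on UNIV f"
  shows "clopen {x. f x i}"
  using assms by (intro clopen_Collect_continuous) (rule continuous_on_product_then_coordinatewise)

lemma clopen_Collect_neg: "clopen {x. P x} \<Longrightarrow> clopen {x. \<not> P x}"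
  unfolding clopen_def by (simp add: open_Collect_neg closed_Collect_neg)

lemma clopen_Collect_conj: "clopen {x. P x} \<Longrightarrow> clopen {x. Q x} \<Longrightarrow> clopen {x. P x \<and> Q x}"
  unfolding clopen_def by (simp add: open_Collect_conj closed_Collect_conj)

lemma clopen_Collect_imp: "clopen {x. P x} \<Longrightarrow> clopen {x. Q x} \<Longrightarrow> clopen {x. P x \<longrightarrow> Q x}"
  unfolding clopen_def by (simp add: open_Collect_imp closed_Collect_imp)

lemma clopen_Collect_eq: "clopen {x. P x} \<Longrightarrow> clopen {x. Q x} \<Longrightarrow> clopen {x. P x = Q x}"
  unfolding iff_conv_conj_imp by (intro clopen_Collect_conj clopen_Collect_imp)

lemma sigma02_iff_fsigma_in: "sigma02 S \<longleftrightarrow> fsigma_in euclidean S"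
proof
  assume "sigma02 S"
  then obtain F :: "nat \<Rightarrow> _" where F: "\<And>n. closed (F n)" and S: "S = \<Union>(range F)"
    unfolding sigma02_def by blast
  have "fsigma_in euclidean (\<Union>(range F))"
    using F by (intro fsigma_in_Union) (auto intro: closed_imp_fsigma_in)
  then show "fsigma_in euclidean S"
    unfolding S .
next
  assume "fsigma_in euclidean S"
  then show "sigma02 S"
    unfolding sigma02_def fsigma_in_ascending by (metis closed_closedin)
qed

lemma pi02_iff_gdelta_in: "pi02 S \<longleftrightarrow> gdelta_in euclidean S"
proof
  assume "pi02 S"
  then obtain U :: "nat \<Rightarrow> _" where U: "\<And>n. open (U n)" and S: "S = \<Inter>(range U)"
    unfolding pi02_def by blast
  have "gdelta_in euclidean (\<Inter>(range U))"
    using U by (intro gdelta_in_Inter) (auto intro: open_imp_gdelta_in)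
  then show "gdelta_in euclidean S"
    unfolding S .
next
  assume "gdelta_in euclidean S"
  then show "pi02 S"
    unfolding pi02_def gdelta_in_descending by (metis open_openin)
qed

lemma delta02_iff_fsigma_gdelta:
  "delta02 S \<longleftrightarrow> fsigma_in euclidean S \<and> gdelta_in euclidean S"
  by (simp add: delta02_def sigma02_iff_fsigma_in pi02_iff_gdelta_in)

lemma delta02_Un: "delta02 S \<Longrightarrow> delta02 T \<Longrightarrow> delta02 (S \<union> T)"
  by (simp add: delta02_iff_fsigma_gdelta fsigma_in_Un gdelta_in_Un)

lemma delta02_Int: "delta02 S \<Longrightarrow> delta02 T \<Longrightarrow> delta02 (S \<inter> T)"
  by (simp add: delta02_iff_fsigma_gdelta fsigma_in_Int gdelta_in_Int)

lemma delta02_UN_clopen: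
  assumes "countable I" "\<And>i. i \<in> I \<Longrightarrow> clopen (A i)"
  shows "delta02 (\<Union>i\<in>I. A i)"
proof -
  have "fsigma_in euclidean (\<Union>i\<in>I. A i)"
    using assms by (intro fsigma_in_Union) (auto simp: clopen_def intro: closed_imp_fsigma_in)
  moreover have "open (\<Union>i\<in>I. A i)"
    using assms by (auto simp: clopen_def)
  ultimately show ?thesis
    by (simp add: delta02_iff_fsigma_gdelta open_imp_gdelta_in)
qed

lemma delta02_Compl:
  assumes "delta02 S"
  shows "delta02 (- S)"
proof -
  have "fsigma_in euclidean S" "gdelta_in euclidean S"
    using assms by (simp_all add: delta02_iff_fsigma_gdelta)
  then have "gdelta_in euclidean (UNIV - S)" "fsigma_in euclidean (UNIV - S)"
    using fsigma_in_gdelta_in [of euclidean S] gdelta_in_fsigma_in [of euclidean S] by simp_all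
  moreover have "- S = UNIV - S"
    by blast
  ultimately show ?thesis
    by (metis delta02_iff_fsigma_gdelta)
qed

lemma delta02_INT_clopen:
  assumes "countable I" "\<And>i. i \<in> I \<Longrightarrow> clopen (A i)"
  shows "delta02 (\<Inter>i\<in>I. A i)"
proof -
  have "delta02 (\<Union>i\<in>I. - A i)"
    using assms by (intro delta02_UN_clopen) (auto simp: clopen_def)
  moreover have "(\<Inter>i\<in>I. A i) = - (\<Union>i\<in>I. - A i)"
    by auto
  ultimately show ?thesis
    by (metis delta02_Compl)
qed

lemma delta02_Collect_neq:
  fixes f g :: "'a::topological_space \<Rightarrow> nat \<Rightarrow> bool"
  assumes "continuous_on UNIV f" "continuous_on UNIV g"
  shows "delta02 {p. f p \<noteq> g p}"
proof -
  have "{p. f p \<noteq> g p} = (\<Union>i. {p. \<not> (f p i = g p i)})"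
    by auto
  moreover have "delta02 (\<Union>i. {p. \<not> (f p i = g p i)})"
    using assms
    by (intro delta02_UN_clopen clopen_Collect_neg clopen_Collect_eq clopen_Collect_coordinate) auto
  ultimately show ?thesis
    by simp
qed

lemma joined_0_iff: "joined G 0 x y \<longleftrightarrow> x = y"
  unfolding joined_def by (auto intro: exI [of _ "\<lambda>_. x"])

lemma joined_1_iff: "joined G 1 x y \<longleftrightarrow> G x y"
proof
  assume "joined G 1 x y"
  then show "G x y"
    unfolding joined_def by auto
next
  assume "G x y"
  then show "joined G 1 x y"
    unfolding joined_def by (intro exI [of _ "\<lambda>i. if i = 0 then x else y"]) auto
qed

lemma joined_2I: "G x z \<Longrightarrow> G z y \<Longrightarrow> joined G 2 x y"
  unfolding joined_def
  by (intro exI [of _ "\<lambda>i. if i = 0 then x else if i = 1 then z else y"])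
    (auto simp: less_Suc_eq numeral_2_eq_2)

lemma joined_le_2I:
  assumes "x = z \<or> G x z" and "z = y \<or> G z y"
  shows "\<exists>n\<le>2. joined G n x y"
  using assms joined_0_iff [of G] joined_1_iff [of G] joined_2I [of G]
  by (metis le_refl one_le_numeral zero_le)

lemma joined_imp_rel:
  assumes "\<And>x y. G x y \<Longrightarrow> E x y" and "reflp E" and "transp E" and "joined G n x y"
  shows "E x y"
proof -
  obtain p where p: "p 0 = x" "p n = y" "\<And>i. i < n \<Longrightarrow> G (p i) (p (Suc i))"
    using assms(4) unfolding joined_def by blast
  have "E x (p i)" if "i \<le> n" for i
    using that
  proof (induction i)
    case 0
    then show ?case
      using p(1) \<open>reflp E\<close> by (simp add: reflpD)
  next
    case (Suc i)
    then show ?case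
      using p(3) assms(1) \<open>transp E\<close> by (meson Suc_le_lessD less_imp_le transpD)
  qed
  then show ?thesis
    using p(2) by blast
qed

lemma diam_bounded_mono: "diam_bounded G j \<Longrightarrow> j \<le> k \<Longrightarrow> diam_bounded G k"
  unfolding diam_bounded_def by (meson le_trans)

lemma has_diameter_SucI:
  assumes "diam_bounded G (Suc k)" and "\<not> diam_bounded G k"
  shows "has_diameter G (Suc k)"
  using assms diam_bounded_mono unfolding has_diameter_def by (metis less_Suc_eq_le)

definition agrees_after_first_zero :: "(nat \<Rightarrow> bool) \<Rightarrow> (nat \<Rightarrow> bool) \<Rightarrow> bool" where
  "agrees_after_first_zero z w \<longleftrightarrow> (\<exists>j. \<not> z j) \<and> (\<forall>j k. \<not> z j \<longrightarrow> j < k \<longrightarrow> z k = w k)"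

definition E0_graph :: "(nat \<Rightarrow> bool) \<Rightarrow> (nat \<Rightarrow> bool) \<Rightarrow> bool" where
  "E0_graph x y \<longleftrightarrow> x \<noteq> y \<and> (agrees_after_first_zero x y \<or> agrees_after_first_zero y x)"

lemma delta02_agrees_after_first_zero:
  fixes f g :: "'a::topological_space \<Rightarrow> nat \<Rightarrow> bool"
  assumes "continuous_on UNIV f" "continuous_on UNIV g"
  shows "delta02 {p. agrees_after_first_zero (f p) (g p)}"
proof -
  have "{p. agrees_after_first_zero (f p) (g p)} =
      (\<Union>j. {p. \<not> f p j}) \<inter> (\<Inter>(j, k)\<in>{(j, k). j < k}. {p. \<not> f p j \<longrightarrow> f p k = g p k})"
    by (auto simp: agrees_after_first_zero_def)
  moreover have "delta02 (\<Union>j. {p. \<not> f p j})"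
    using assms by (intro delta02_UN_clopen clopen_Collect_neg clopen_Collect_coordinate) auto
  moreover have "clopen {p. \<not> f p j \<longrightarrow> f p k = g p k}" for j k
    using assms by (intro clopen_Collect_imp clopen_Collect_neg clopen_Collect_eq clopen_Collect_coordinate)
  then have "delta02 (\<Inter>(j, k)\<in>{(j, k). j < k}. {p. \<not> f p j \<longrightarrow> f p k = g p k})"
    by (intro delta02_INT_clopen) auto
  ultimately show ?thesis
    by (simp add: delta02_Int)
qed

lemma delta02_E0_graph: "delta02 {(x, y). E0_graph x y}"
proof -
  have "continuous_on UNIV fst" "continuous_on UNIV snd"
    by (simp_all add: continuous_on_fst continuous_on_snd continuous_on_id)
  then have "delta02 ({p. fst p \<noteq> snd p} \<inter>
      ({p. agrees_after_first_zero (fst p) (snd p)} \<union> {p. agrees_after_first_zero (snd p) (fst p)}))"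
    by (intro delta02_Int delta02_Un delta02_Collect_neq delta02_agrees_after_first_zero)
  moreover have "{(x, y). E0_graph x y} = {p. fst p \<noteq> snd p} \<inter>
      ({p. agrees_after_first_zero (fst p) (snd p)} \<union> {p. agrees_after_first_zero (snd p) (fst p)})"
    by (auto simp: E0_graph_def)
  ultimately show ?thesis
    by simp
qed

lemma reflp_E0: "reflp E0"
  unfolding reflp_def E0_def by blast

lemma transp_E0: "transp E0"
proof (rule transpI)
  fix x y z
  assume "E0 x y" "E0 y z"
  then obtain m1 m2 where "\<forall>n\<ge>m1. x n = y n" "\<forall>n\<ge>m2. y n = z n"
    unfolding E0_def by blast
  then have "\<forall>n\<ge>max m1 m2. x n = z n"
    by simp
  then show "E0 x z"
    unfolding E0_def by blast
qed

lemma agrees_after_first_zero_imp_E0: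
  assumes "agrees_after_first_zero z w"
  shows "E0 z w"
proof -
  obtain j where "\<not> z j" "\<forall>k>j. z k = w k"
    using assms unfolding agrees_after_first_zero_def by blast
  then show ?thesis
    unfolding E0_def by (metis Suc_le_eq)
qed

lemma E0_graph_imp_E0: "E0_graph x y \<Longrightarrow> E0 x y"
  unfolding E0_graph_def using agrees_after_first_zero_imp_E0 by (metis E0_def)

lemma E0_imp_joined_E0_graph:
  assumes "E0 x y"
  shows "\<exists>n\<le>2. joined E0_graph n x y"
proof -
  obtain m where m: "\<forall>n\<ge>m. x n = y n"
    using assms unfolding E0_def by blast
  define z where "z k \<longleftrightarrow> k < m \<or> (m < k \<and> x k)" for k
  have "agrees_after_first_zero z x" "agrees_after_first_zero z y"
    using m unfolding agrees_after_first_zero_def z_def by auto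
  then have "x = z \<or> E0_graph x z" "z = y \<or> E0_graph z y"
    unfolding E0_graph_def by auto
  then show ?thesis
    by (rule joined_le_2I)
qed

lemma graph_connected_rel_E0_graph: "graph_connected_rel E0_graph = E0"
proof (intro ext iffI)
  fix x y
  show "graph_connected_rel E0_graph x y \<Longrightarrow> E0 x y"
    unfolding graph_connected_rel_def
    using joined_imp_rel [OF E0_graph_imp_E0 reflp_E0 transp_E0] by blast
  show "E0 x y \<Longrightarrow> graph_connected_rel E0_graph x y"
    unfolding graph_connected_rel_def using E0_imp_joined_E0_graph by blast
qed

lemma diam_bounded_E0_graph: "diam_bounded E0_graph 2"
  unfolding diam_bounded_def graph_connected_rel_E0_graph by (simp add: E0_imp_joined_E0_graph)

lemma not_diam_bounded_E0_graph_1: "\<not> diam_bounded E0_graph 1"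
proof
  define x :: "nat \<Rightarrow> bool" where "x n \<longleftrightarrow> False" for n
  define y :: "nat \<Rightarrow> bool" where "y n \<longleftrightarrow> n = 1" for n
  assume "diam_bounded E0_graph 1"
  moreover have "E0 x y"
    unfolding E0_def x_def y_def by (intro exI [of _ 2]) auto
  ultimately obtain n where "n \<le> 1" "joined E0_graph n x y"
    unfolding diam_bounded_def graph_connected_rel_E0_graph by blast
  moreover have "x \<noteq> y"
    unfolding x_def y_def by (metis zero_neq_one)
  moreover have "\<not> E0_graph x y"
    unfolding E0_graph_def agrees_after_first_zero_def x_def y_def by force
  ultimately show False
    using joined_0_iff joined_1_iff by (metis le_SucE le_zero_eq One_nat_def)
qed

theorem proposition3p7:
  shows "delta02_graphable_diam E0 2"
proof -
  have "simple_graph E0_graph"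
    unfolding simple_graph_def E0_graph_def by blast
  moreover have "has_diameter E0_graph 2"
    using has_diameter_SucI [of E0_graph 1] diam_bounded_E0_graph not_diam_bounded_E0_graph_1
    by (simp add: numeral_2_eq_2)
  ultimately show ?thesis
    unfolding delta02_graphable_diam_def
    using delta02_E0_graph graph_connected_rel_E0_graph by blast
qed

end
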